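(* Let $\mathfrak g$ be a finite-dimensional Lie algebra over a field $\mathbb K$ of characteristic zero, and let $\mathfrak h_m=V\oplus\mathbb K e\subset\mathfrak g$ be an ideal isomorphic to the Heisenberg algebra, such that the center of $\mathfrak g$ coincides with the center $\mathbb K e$ of $\mathfrak h_m$. Then there exists a subalgebra $\mathfrak b\subset\mathfrak g$ such that $\mathfrak g=\mathfrak b\oplus V$ (direct sum of vector spaces) and $\mathfrak b\cap\mathfrak h_m=\mathbb K e$. Moreover $V$ is invariant under $\operatorname{ad}_\beta$ for all $\beta\in\mathfrak b$, and each $\operatorname{ad}_\beta|_V$ lies in the symplectic Lie algebra $sp(V,\omega)$.
   Context: The Heisenberg structure: $\dim V=2m$, $e$ central in $\mathfrak h_m$, and $[\xi_1,\xi_2]=\omega(\xi_1,\xi_2)e$ for $\xi_1,\xi_2\in V$, where $\omega$ is a symplectic form on $V$. *)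

theory Defs
  imports Complex_Main
begin

definition lie_algebra :: "('k::field \<Rightarrow> 'v::ab_group_add \<Rightarrow> 'v) \<Rightarrow> ('v \<Rightarrow> 'v \<Rightarrow> 'v) \<Rightarrow> bool" where
  "lie_algebra scale br \<longleftrightarrow>
     vector_space scale \<and>
     (\<forall>a x y z. br (scale a x + y) z = scale a (br x z) + br y z) \<and>
     (\<forall>a x y z. br z (scale a x + y) = scale a (br z x) + br z y) \<and>
     (\<forall>x. br x x = 0) \<and>
     (\<forall>x y z. br x (br y z) + br y (br z x) + br z (br x y) = 0)"

definition fin_dim :: "('k::field \<Rightarrow> 'v::ab_group_add \<Rightarrow> 'v) \<Rightarrow> bool" where
  "fin_dim scale \<longleftrightarrow> (\<exists>B. finite B \<and> module.span scale B = UNIV)"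

definition lie_subalgebra :: "('k::field \<Rightarrow> 'v::ab_group_add \<Rightarrow> 'v) \<Rightarrow> ('v \<Rightarrow> 'v \<Rightarrow> 'v) \<Rightarrow> 'v set \<Rightarrow> bool" where
  "lie_subalgebra scale br S \<longleftrightarrow> module.subspace scale S \<and> (\<forall>x\<in>S. \<forall>y\<in>S. br x y \<in> S)"

definition lie_ideal :: "('k::field \<Rightarrow> 'v::ab_group_add \<Rightarrow> 'v) \<Rightarrow> ('v \<Rightarrow> 'v \<Rightarrow> 'v) \<Rightarrow> 'v set \<Rightarrow> bool" where
  "lie_ideal scale br S \<longleftrightarrow> module.subspace scale S \<and> (\<forall>x. \<forall>y\<in>S. br x y \<in> S)"

definition lie_center :: "('v::ab_group_add \<Rightarrow> 'v \<Rightarrow> 'v) \<Rightarrow> 'v set \<Rightarrow> 'v set" where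
  "lie_center br S = {z\<in>S. \<forall>x\<in>S. br z x = 0}"

definition symplectic_form :: "('k::field \<Rightarrow> 'v::ab_group_add \<Rightarrow> 'v) \<Rightarrow> 'v set \<Rightarrow> ('v \<Rightarrow> 'v \<Rightarrow> 'k) \<Rightarrow> bool" where
  "symplectic_form scale V \<omega> \<longleftrightarrow>
     (\<forall>a. \<forall>x\<in>V. \<forall>y\<in>V. \<forall>z\<in>V. \<omega> (scale a x + y) z = a * \<omega> x z + \<omega> y z) \<and>
     (\<forall>a. \<forall>x\<in>V. \<forall>y\<in>V. \<forall>z\<in>V. \<omega> z (scale a x + y) = a * \<omega> z x + \<omega> z y) \<and>
     (\<forall>x\<in>V. \<omega> x x = 0) \<and>
     (\<forall>x\<in>V. (\<forall>y\<in>V. \<omega> x y = 0) \<longrightarrow> x = 0)"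

definition in_sp :: "('k::field \<Rightarrow> 'v::ab_group_add \<Rightarrow> 'v) \<Rightarrow> 'v set \<Rightarrow> ('v \<Rightarrow> 'v \<Rightarrow> 'k) \<Rightarrow> ('v \<Rightarrow> 'v) \<Rightarrow> bool" where
  "in_sp scale V \<omega> A \<longleftrightarrow>
     (\<forall>x\<in>V. A x \<in> V) \<and>
     (\<forall>a. \<forall>x\<in>V. \<forall>y\<in>V. A (scale a x + y) = scale a (A x) + A y) \<and>
     (\<forall>x\<in>V. \<forall>y\<in>V. \<omega> (A x) y + \<omega> x (A y) = 0)"

end

theory Submission imports Defs begin

text \<open>The complement is the normalizer \<open>b = {x. [x, V] \<subseteq> V}\<close> of \<open>V\<close>, a subalgebra by Jacobi.
  Since \<open>h\<close> is an ideal, \<open>w \<mapsto> [x, w]\<close> maps \<open>V\<close> into \<open>h = V \<oplus> \<bbbK>e\<close>, and its \<open>e\<close>-component is a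
  linear form on \<open>V\<close>; by nondegeneracy of \<open>\<omega>\<close> it equals \<open>\<omega>(u, -)\<close> for some \<open>u \<in> V\<close>, and then
  \<open>x - u \<in> b\<close>, so \<open>g = b + V\<close>.  For \<open>v + ae \<in> b\<close> the brackets \<open>[v + ae, w] = \<omega>(v, w) e\<close> lie in
  \<open>V\<close>, which forces \<open>v = 0\<close>; hence \<open>b \<inter> h = \<bbbK>e\<close> and \<open>b \<inter> V = 0\<close>.  Finally, the Jacobi
  identity for \<open>\<beta> \<in> b\<close> and \<open>x, y \<in> V\<close>, with \<open>e\<close> central, says that \<open>ad \<beta>\<close> is \<open>\<omega>\<close>-skew.\<close>

definition linear_on ::
    "('a::field \<Rightarrow> 'b::ab_group_add \<Rightarrow> 'b) \<Rightarrow> ('a \<Rightarrow> 'c::ab_group_add \<Rightarrow> 'c) \<Rightarrow> 'b set \<Rightarrow> ('b \<Rightarrow> 'c) \<Rightarrow> bool" where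
  "linear_on s1 s2 V f \<longleftrightarrow> (\<forall>a. \<forall>x\<in>V. \<forall>y\<in>V. f (s1 a x + y) = s2 a (f x) + f y)"

lemma vector_space_mult: "vector_space ((*) :: 'a::field \<Rightarrow> 'a \<Rightarrow> 'a)"
  by unfold_locales (simp_all add: algebra_simps)

lemma linear_on_form_diff:
  "linear_on s1 (*) V f \<Longrightarrow> linear_on s1 (*) V g \<Longrightarrow> linear_on s1 (*) V (\<lambda>x. f x - g x)"
  by (simp add: linear_on_def algebra_simps)

context vector_space
begin

lemma linear_on_zero:
  assumes "vector_space s2" "subspace V" "linear_on scale s2 V f"
  shows "f 0 = 0"
proof -
  interpret s2: vector_space s2 by fact
  have "f 0 = s2 1 (f 0) + f 0"
    using assms(3) subspace_0[OF assms(2)] unfolding linear_on_def by (metis add_0 scale_one)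
  then show ?thesis by simp
qed

lemma linear_on_eq_0_on_span:
  assumes s2: "vector_space s2" and V: "subspace V" and BV: "B \<subseteq> V"
    and f: "linear_on scale s2 V f" and fB: "\<forall>b\<in>B. f b = 0" and w: "w \<in> span B"
  shows "f w = 0"
proof -
  interpret s2: vector_space s2 by fact
  have "w \<in> V \<and> f w = 0"
    using w
  proof (induction rule: span_induct_alt)
    case base
    show ?case using linear_on_zero[OF s2 V f] subspace_0[OF V] by simp
  next
    case (step c x y)
    then have "x \<in> V" using BV by blast
    then show ?case
      using step f fB subspace_add[OF V] subspace_scale[OF V]
      unfolding linear_on_def by simp
  qed
  then show ?thesis ..
qed

lemma subspace_image_linear_on:
  assumes V: "subspace V" and f: "linear_on scale scale V f"
    and S: "subspace S" and SV: "S \<subseteq> V"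
  shows "subspace (f ` S)"
proof (rule subspaceI)
  have f0: "f 0 = 0" using linear_on_zero[OF vector_space_axioms V f] .
  show "0 \<in> f ` S" using subspace_0[OF S] f0 by (metis image_eqI)
  show "x + y \<in> f ` S" if xy: "x \<in> f ` S" "y \<in> f ` S" for x y
  proof -
    obtain x' y' where "x' \<in> S" "y' \<in> S" "x = f x'" "y = f y'" using xy by blast
    moreover have "f (x' + y') = x + y"
      using calculation f[unfolded linear_on_def, rule_format, of x' y' 1] SV by auto
    ultimately show ?thesis using subspace_add[OF S] by (metis image_eqI)
  qed
  show "scale c x \<in> f ` S" if x: "x \<in> f ` S" for c x
  proof -
    obtain x' where "x' \<in> S" "x = f x'" using x by blast
    moreover have "f (scale c x') = scale c x"
      using calculation f[unfolded linear_on_def, rule_format, of x' 0 c] SV subspace_0[OF V] f0 by auto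
    ultimately show ?thesis using subspace_scale[OF S] by (metis image_eqI)
  qed
qed

lemma independent_image_linear_on:
  assumes V: "subspace V" and f: "linear_on scale scale V f" and inj: "inj_on f V"
    and B: "independent B" "B \<subseteq> V"
  shows "independent (f ` B)"
proof
  assume "dependent (f ` B)"
  then obtain b where b: "b \<in> B" "f b \<in> span (f ` B - {f b})"
    unfolding dependent_def by blast
  have sub_V: "span (B - {b}) \<subseteq> V" using span_minimal[OF _ V] B(2) by blast
  have sub: "subspace (f ` span (B - {b}))"
    using subspace_image_linear_on[OF V f subspace_span sub_V] .
  have "f ` B - {f b} = f ` (B - {b})"
    using inj_on_image_set_diff[OF inj, of B "{b}"] B(2) b(1) by auto
  then have "span (f ` B - {f b}) \<subseteq> f ` span (B - {b})"
    using span_minimal[OF _ sub] span_superset by (metis image_mono)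
  then obtain u where "u \<in> span (B - {b})" "f b = f u" using b(2) by blast
  moreover have "b = u"
    using calculation sub_V b(1) B(2) inj by (metis inj_onD subsetD)
  ultimately show False using B(1) b(1) unfolding dependent_def by blast
qed

text \<open>The image of a basis is independent and of the same cardinality, hence again a basis.\<close>
lemma linear_on_inj_imp_surj:
  assumes B: "finite B" "independent B" and V: "span B = V"
    and fV: "f ` V \<subseteq> V" and f: "linear_on scale scale V f" and inj: "inj_on f V"
  shows "f ` V = V"
proof -
  have subV: "subspace V" using V subspace_span by blast
  have BV: "B \<subseteq> V" using V span_superset by blast
  let ?D = "f ` B"
  have indD: "independent ?D" using independent_image_linear_on[OF subV f inj B(2) BV] .
  have cardD: "card ?D = card B" using inj BV card_image inj_on_subset by blast
  have "V \<subseteq> span ?D"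
  proof
    fix t assume tV: "t \<in> V"
    show "t \<in> span ?D"
    proof (rule ccontr)
      assume t: "t \<notin> span ?D"
      have "insert t ?D \<subseteq> span B" using tV fV BV V by auto
      then have "card (insert t ?D) \<le> card B"
        using independent_span_bound[OF B(1) independent_insertI[OF t indD]] by blast
      moreover have "t \<notin> ?D" using t span_base by blast
      ultimately show False using cardD B(1) by simp
    qed
  qed
  moreover have "span ?D \<subseteq> f ` V"
    using span_minimal[OF _ subspace_image_linear_on[OF subV f subV order_refl]] BV by blast
  ultimately show ?thesis using fV by blast
qed

lemma independent_coeffs_unique:
  assumes "finite B" "independent B" "(\<Sum>b\<in>B. scale (c b) b) = (\<Sum>b\<in>B. scale (d b) b)" "b \<in> B"
  shows "c b = d b"
proof -
  have "(\<Sum>b\<in>B. scale (c b - d b) b) = 0"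
    using assms(3) by (simp add: scale_left_diff_distrib sum_subtractf)
  then show ?thesis using independentD[OF assms(2,1) order_refl] assms(4) by fastforce
qed

text \<open>The map
  \<open>\<Phi> u = (\<Sum>b\<in>B. \<omega> u b *s b)\<close> is injective on \<open>V\<close> by nondegeneracy, hence onto \<open>V\<close>;
  a preimage of \<open>\<Sum>b\<in>B. f b *s b\<close> represents \<open>f\<close> on the basis \<open>B\<close>, hence on \<open>V\<close>.\<close>
lemma nondegenerate_form_represents:
  fixes \<omega> :: "'b \<Rightarrow> 'b \<Rightarrow> 'a"
  assumes V: "subspace V" and fin: "finite S" "V \<subseteq> span S"
    and lin1: "\<forall>z\<in>V. linear_on scale (*) V (\<lambda>x. \<omega> x z)"
    and lin2: "\<forall>z\<in>V. linear_on scale (*) V (\<omega> z)"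
    and nondeg: "\<forall>x\<in>V. (\<forall>y\<in>V. \<omega> x y = 0) \<longrightarrow> x = 0"
    and f: "linear_on scale (*) V f"
  shows "\<exists>u\<in>V. \<forall>w\<in>V. \<omega> u w = f w"
proof -
  obtain B where B: "B \<subseteq> V" "independent B" "V \<subseteq> span B"
    by (meson basis_exists)
  have finB: "finite B" using independent_span_bound[OF fin(1) B(2)] B(1) fin(2) by blast
  have spanB: "span B = V" using B span_minimal[OF B(1) V] by blast
  have vanish: "\<forall>w\<in>V. g w = 0" if "linear_on scale (*) V g" "\<forall>b\<in>B. g b = 0" for g
    using linear_on_eq_0_on_span[OF vector_space_mult V B(1) that] spanB by blast
  define \<Phi> where "\<Phi> u = (\<Sum>b\<in>B. scale (\<omega> u b) b)" for u
  have \<Phi>V: "\<Phi> ` V \<subseteq> V"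
    unfolding \<Phi>_def using B(1) by (auto intro!: subspace_sum[OF V] subspace_scale[OF V])
  have \<Phi>_lin: "linear_on scale scale V \<Phi>"
    unfolding linear_on_def \<Phi>_def
  proof (intro allI ballI)
    fix a x y assume "x \<in> V" "y \<in> V"
    then have "(\<Sum>b\<in>B. scale (\<omega> (scale a x + y) b) b) = (\<Sum>b\<in>B. scale (a * \<omega> x b + \<omega> y b) b)"
      using lin1 B(1) unfolding linear_on_def by (intro sum.cong) auto
    then show "(\<Sum>b\<in>B. scale (\<omega> (scale a x + y) b) b)
        = scale a (\<Sum>b\<in>B. scale (\<omega> x b) b) + (\<Sum>b\<in>B. scale (\<omega> y b) b)"
      by (simp add: scale_left_distrib sum.distrib scale_sum_right)
  qed
  have \<Phi>_inj: "inj_on \<Phi> V"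
  proof (rule inj_onI)
    fix x y assume xy: "x \<in> V" "y \<in> V" "\<Phi> x = \<Phi> y"
    have "\<forall>b\<in>B. \<omega> x b - \<omega> y b = 0"
      using independent_coeffs_unique[OF finB B(2), of "\<omega> x" "\<omega> y"] xy(3) unfolding \<Phi>_def by simp
    then have "\<forall>w\<in>V. \<omega> x w - \<omega> y w = 0"
      using vanish linear_on_form_diff lin2 xy(1,2) by blast
    moreover have "\<omega> (x - y) w = \<omega> x w - \<omega> y w" if "w \<in> V" for w
      using bspec[OF lin1 that, unfolded linear_on_def, rule_format, of y x "-1"] xy(1,2)
      by (simp add: algebra_simps)
    moreover have "x - y \<in> V" using xy subspace_diff[OF V] by blast
    ultimately have "x - y = 0" using nondeg by (metis diff_self)
    then show "x = y" by simp
  qed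
  have "(\<Sum>b\<in>B. scale (f b) b) \<in> V"
    using B(1) by (auto intro!: subspace_sum[OF V] subspace_scale[OF V])
  then obtain u where u: "u \<in> V" "\<Phi> u = (\<Sum>b\<in>B. scale (f b) b)"
    using linear_on_inj_imp_surj[OF finB B(2) spanB \<Phi>V \<Phi>_lin \<Phi>_inj] by (metis imageE)
  have "\<forall>b\<in>B. \<omega> u b - f b = 0"
    using independent_coeffs_unique[OF finB B(2), of "\<omega> u" f] u(2) unfolding \<Phi>_def by simp
  then have "\<forall>w\<in>V. \<omega> u w - f w = 0"
    using vanish linear_on_form_diff lin2 f u(1) by blast
  then show ?thesis using u(1) by auto
qed

end

definition lie_normalizer :: "('v \<Rightarrow> 'v \<Rightarrow> 'v) \<Rightarrow> 'v set \<Rightarrow> 'v set" where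
  "lie_normalizer br V = {x. \<forall>v\<in>V. br x v \<in> V}"

locale lie_alg =
  fixes scale :: "'k::field \<Rightarrow> 'v::ab_group_add \<Rightarrow> 'v" and br :: "'v \<Rightarrow> 'v \<Rightarrow> 'v"
  assumes lie_algebra: "lie_algebra scale br"
begin

sublocale vector_space scale
  using lie_algebra unfolding lie_algebra_def by blast

lemma bracket_linear_left: "br (scale a x + y) z = scale a (br x z) + br y z"
  and bracket_linear_right: "br z (scale a x + y) = scale a (br z x) + br z y"
  and bracket_self: "br x x = 0"
  and jacobi: "br x (br y z) + br y (br z x) + br z (br x y) = 0"
  using lie_algebra unfolding lie_algebra_def by blast+

lemma bracket_zero_left [simp]: "br 0 z = 0"
  using bracket_linear_left[of 1 0 0 z] by simp

lemma bracket_zero_right [simp]: "br z 0 = 0"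
  using bracket_linear_right[of z 1 0 0] by simp

lemma bracket_add_left: "br (x + y) z = br x z + br y z"
  using bracket_linear_left[of 1 x y z] by simp

lemma bracket_add_right: "br z (x + y) = br z x + br z y"
  using bracket_linear_right[of z 1 x y] by simp

lemma bracket_scale_left: "br (scale a x) z = scale a (br x z)"
  using bracket_linear_left[of a x 0 z] by simp

lemma bracket_scale_right: "br z (scale a x) = scale a (br z x)"
  using bracket_linear_right[of z a x 0] by simp

lemma bracket_diff_left: "br (x - y) z = br x z - br y z"
  using bracket_linear_left[of "-1" y x z] by (simp add: algebra_simps)

lemma bracket_antisym: "br x y = - br y x"
proof -
  have "br (x + y) (x + y) = br x y + br y x"
    by (simp only: bracket_add_left bracket_add_right) (simp add: bracket_self)
  then have "br x y + br y x = 0" by (simp add: bracket_self)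
  then show ?thesis by (simp add: eq_neg_iff_add_eq_0)
qed

lemma bracket_minus_right: "br z (- x) = - br z x"
  using bracket_scale_right[of z "-1" x] by simp

lemma lie_subalgebra_normalizer:
  assumes V: "subspace V"
  shows "lie_subalgebra scale br (lie_normalizer br V)"
  unfolding lie_subalgebra_def
proof
  show "subspace (lie_normalizer br V)"
    unfolding lie_normalizer_def
    by (rule subspaceI) (simp_all add: subspace_0[OF V] subspace_add[OF V] subspace_scale[OF V]
        bracket_add_left bracket_scale_left)
  show "\<forall>x\<in>lie_normalizer br V. \<forall>y\<in>lie_normalizer br V. br x y \<in> lie_normalizer br V"
    unfolding lie_normalizer_def
  proof (intro ballI CollectI)
    fix x y v assume "x \<in> {x. \<forall>v\<in>V. br x v \<in> V}" "y \<in> {x. \<forall>v\<in>V. br x v \<in> V}" "v \<in> V"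
    moreover have "br (br x y) v = br x (br y v) - br y (br x v)"
      using jacobi[of x y v]
      unfolding bracket_antisym[of v "br x y"] bracket_antisym[of v x] bracket_minus_right
      by (simp add: algebra_simps eq_diff_eq)
    ultimately show "br (br x y) v \<in> V" using subspace_diff[OF V] by simp
  qed
qed

end

locale heisenberg_ideal = lie_alg scale br
  for scale :: "'k::field \<Rightarrow> 'v::ab_group_add \<Rightarrow> 'v" and br +
  fixes V :: "'v set" and e :: 'v and \<omega> :: "'v \<Rightarrow> 'v \<Rightarrow> 'k"
  assumes finite_dim: "fin_dim scale"
    and subspace_V: "subspace V"
    and e_notin_V: "e \<notin> V"
    and symplectic: "symplectic_form scale V \<omega>"
    and bracket_V: "\<And>x y. x \<in> V \<Longrightarrow> y \<in> V \<Longrightarrow> br x y = scale (\<omega> x y) e"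
    and e_central: "\<And>x. br e x = 0"
    and ideal: "lie_ideal scale br {v + scale a e | v a. v \<in> V}"
begin

abbreviation heis :: "'v set" where
  "heis \<equiv> {v + scale a e | v a. v \<in> V}"

lemma scale_e_in_V_iff: "scale c e \<in> V \<longleftrightarrow> c = 0"
proof
  assume "scale c e \<in> V"
  then show "c = 0"
    using e_notin_V subspace_scale[OF subspace_V, of "scale c e" "inverse c"] by (cases "c = 0") auto
qed (simp add: subspace_0[OF subspace_V])

lemma e_coeff_unique:
  assumes "v \<in> V" "v' \<in> V" "v + scale a e = v' + scale a' e"
  shows "a = a'"
proof -
  have "scale (a - a') e = v' - v"
    using assms(3) by (simp add: scale_left_diff_distrib algebra_simps)
  then have "scale (a - a') e \<in> V" using assms(1,2) subspace_diff[OF subspace_V] by simp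
  then show ?thesis by (simp add: scale_e_in_V_iff)
qed

lemma form_linear_left: "z \<in> V \<Longrightarrow> linear_on scale (*) V (\<lambda>x. \<omega> x z)"
  and form_linear_right: "z \<in> V \<Longrightarrow> linear_on scale (*) V (\<omega> z)"
  and form_nondegenerate: "\<forall>x\<in>V. (\<forall>y\<in>V. \<omega> x y = 0) \<longrightarrow> x = 0"
  using symplectic unfolding symplectic_form_def linear_on_def by blast+

lemma form_antisym:
  assumes "x \<in> V" "y \<in> V"
  shows "\<omega> y x = - \<omega> x y"
proof -
  have xy: "x + y \<in> V" using assms subspace_add[OF subspace_V] by blast
  have "\<omega> (x + y) (x + y) = \<omega> x x + \<omega> x y + (\<omega> y x + \<omega> y y)"
    using form_linear_left[OF xy, unfolded linear_on_def, rule_format, of x y 1]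
      form_linear_right[unfolded linear_on_def, rule_format, of _ x y 1] assms xy by simp
  moreover have "\<forall>x\<in>V. \<omega> x x = 0" using symplectic unfolding symplectic_form_def by blast
  ultimately show ?thesis using assms xy by (simp add: eq_neg_iff_add_eq_0 add.commute)
qed

text \<open>Only meaningful on \<open>heis\<close>, where the decomposition \<open>v + a e\<close> is unique.\<close>
definition e_coeff :: "'v \<Rightarrow> 'k" where
  "e_coeff z = (SOME a. z - scale a e \<in> V)"

lemma e_coeff_in_V:
  assumes "z \<in> heis"
  shows "z - scale (e_coeff z) e \<in> V"
proof -
  obtain v a where "v \<in> V" "z = v + scale a e" using assms by blast
  then have "\<exists>a. z - scale a e \<in> V" by (metis add_diff_cancel)
  then show ?thesis unfolding e_coeff_def by (rule someI_ex)
qed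

lemma e_coeff_eq: "v \<in> V \<Longrightarrow> e_coeff (v + scale a e) = a"
  using e_coeff_in_V[of "v + scale a e"] e_coeff_unique[of _ v] by force

lemma bracket_in_heis: "w \<in> V \<Longrightarrow> br x w \<in> heis"
proof -
  assume "w \<in> V"
  then have "w + scale 0 e \<in> heis" by blast
  then show ?thesis using ideal unfolding lie_ideal_def by simp
qed

lemma linear_on_e_coeff_bracket: "linear_on scale (*) V (\<lambda>w. e_coeff (br x w))"
  unfolding linear_on_def
proof (intro allI ballI)
  fix c w1 w2 assume w: "w1 \<in> V" "w2 \<in> V"
  define v1 where "v1 = br x w1 - scale (e_coeff (br x w1)) e"
  define v2 where "v2 = br x w2 - scale (e_coeff (br x w2)) e"
  have v: "v1 \<in> V" "v2 \<in> V" unfolding v1_def v2_def using e_coeff_in_V bracket_in_heis w by auto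
  have "br x (scale c w1 + w2) = scale c (br x w1) + br x w2" by (rule bracket_linear_right)
  also have "\<dots> = (scale c v1 + v2) + scale (c * e_coeff (br x w1) + e_coeff (br x w2)) e"
    unfolding v1_def v2_def by (simp add: scale_right_diff_distrib scale_left_distrib algebra_simps)
  finally have "br x (scale c w1 + w2)
      = (scale c v1 + v2) + scale (c * e_coeff (br x w1) + e_coeff (br x w2)) e" .
  moreover have "scale c v1 + v2 \<in> V" using v subspace_add[OF subspace_V] subspace_scale[OF subspace_V] by blast
  ultimately show "e_coeff (br x (scale c w1 + w2)) = c * e_coeff (br x w1) + e_coeff (br x w2)"
    by (simp add: e_coeff_eq)
qed

lemma normalizer_plus_V: "{x + y | x y. x \<in> lie_normalizer br V \<and> y \<in> V} = UNIV"
proof -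
  have "x \<in> {x + y | x y. x \<in> lie_normalizer br V \<and> y \<in> V}" for x
  proof -
    obtain S where S: "finite S" "span S = UNIV" using finite_dim unfolding fin_dim_def by blast
    obtain u where u: "u \<in> V" "\<forall>w\<in>V. \<omega> u w = e_coeff (br x w)"
      using nondegenerate_form_represents[OF subspace_V S(1) _ _ _ form_nondegenerate
          linear_on_e_coeff_bracket] S(2) form_linear_left form_linear_right by blast
    have "br (x - u) w \<in> V" if "w \<in> V" for w
      using e_coeff_in_V[OF bracket_in_heis] that u by (simp add: bracket_diff_left bracket_V)
    then have "x - u \<in> lie_normalizer br V" unfolding lie_normalizer_def by blast
    then show ?thesis using u(1) by (intro CollectI exI[of _ "x - u"] exI[of _ u]) simp
  qed
  then show ?thesis by blast
qed

lemma normalizer_inter_heis: "lie_normalizer br V \<inter> heis = span {e}"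
proof
  show "lie_normalizer br V \<inter> heis \<subseteq> span {e}"
  proof
    fix x assume x: "x \<in> lie_normalizer br V \<inter> heis"
    then obtain v a where va: "v \<in> V" "x = v + scale a e" by blast
    have "\<omega> v w = 0" if "w \<in> V" for w
    proof -
      have "br x w = scale (\<omega> v w) e"
        using va that by (simp add: bracket_add_left bracket_scale_left e_central bracket_V)
      then show ?thesis using x that scale_e_in_V_iff unfolding lie_normalizer_def by auto
    qed
    then have "v = 0" using form_nondegenerate va(1) by blast
    then show "x \<in> span {e}" using va by (auto simp: span_singleton)
  qed
  show "span {e} \<subseteq> lie_normalizer br V \<inter> heis"
  proof
    fix x assume "x \<in> span {e}"
    then obtain k where k: "x = scale k e" by (auto simp: span_singleton)
    then have "x \<in> heis" using subspace_0[OF subspace_V] by force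
    moreover have "x \<in> lie_normalizer br V"
      unfolding lie_normalizer_def k by (simp add: bracket_scale_left e_central subspace_0[OF subspace_V])
    ultimately show "x \<in> lie_normalizer br V \<inter> heis" by blast
  qed
qed

lemma normalizer_inter_V: "lie_normalizer br V \<inter> V = {0}"
proof -
  have "V \<subseteq> heis" by force
  then have "lie_normalizer br V \<inter> V \<subseteq> span {e} \<inter> V" using normalizer_inter_heis by blast
  also have "\<dots> \<subseteq> {0}" by (auto simp: span_singleton scale_e_in_V_iff)
  finally show ?thesis
    using subspace_0[OF subspace_V] by (auto simp: lie_normalizer_def)
qed

text \<open>Jacobi for \<open>\<beta>, x, y\<close> with \<open>e\<close> central reads \<open>(\<omega>(x, \<beta>y) - \<omega>(y, \<beta>x)) e = 0\<close>.\<close>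
lemma in_sp_bracket:
  assumes \<beta>: "\<beta> \<in> lie_normalizer br V"
  shows "in_sp scale V \<omega> (br \<beta>)"
  unfolding in_sp_def
proof (intro conjI ballI allI)
  show "br \<beta> x \<in> V" if "x \<in> V" for x using \<beta> that unfolding lie_normalizer_def by blast
  show "br \<beta> (scale a x + y) = scale a (br \<beta> x) + br \<beta> y" for a x y
    by (rule bracket_linear_right)
  fix x y assume xy: "x \<in> V" "y \<in> V"
  have bxy: "br \<beta> x \<in> V" "br \<beta> y \<in> V" using \<beta> xy unfolding lie_normalizer_def by blast+
  have "br \<beta> (br x y) = 0"
    using xy by (simp add: bracket_V bracket_scale_right bracket_antisym[of \<beta> e] e_central)
  moreover have "br x (br y \<beta>) = - scale (\<omega> x (br \<beta> y)) e"
    using xy bxy by (simp add: bracket_antisym[of y \<beta>] bracket_minus_right bracket_V)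
  moreover have "br y (br \<beta> x) = scale (\<omega> y (br \<beta> x)) e"
    using xy bxy by (simp add: bracket_V)
  ultimately have "scale (\<omega> y (br \<beta> x) - \<omega> x (br \<beta> y)) e = 0"
    using jacobi[of \<beta> x y] by (simp add: scale_left_diff_distrib)
  moreover have "e \<noteq> 0" using e_notin_V subspace_0[OF subspace_V] by blast
  ultimately have "\<omega> y (br \<beta> x) = \<omega> x (br \<beta> y)" by simp
  then show "\<omega> (br \<beta> x) y + \<omega> x (br \<beta> y) = 0"
    using form_antisym[OF xy(2) bxy(1)] by simp
qed

end

theorem lemma6:
  fixes scale :: "'k::field_char_0 \<Rightarrow> 'v::ab_group_add \<Rightarrow> 'v"
    and br :: "'v \<Rightarrow> 'v \<Rightarrow> 'v"
    and V :: "'v set" and e :: 'v and \<omega> :: "'v \<Rightarrow> 'v \<Rightarrow> 'k" and m :: nat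
  defines "h \<equiv> {v + scale a e | v a. v \<in> V}"
  assumes lie: "lie_algebra scale br"
    and fd: "fin_dim scale"
    and V_sub: "module.subspace scale V"
    and dimV: "vector_space.dim scale V = 2 * m"
    and e_ne: "e \<noteq> 0"
    and e_notin: "e \<notin> V"
    and symp: "symplectic_form scale V \<omega>"
    and heis: "\<forall>x\<in>V. \<forall>y\<in>V. br x y = scale (\<omega> x y) e"
    and e_central_h: "\<forall>x\<in>h. br e x = 0"
    and ideal: "lie_ideal scale br h"
    and center_h: "lie_center br h = module.span scale {e}"
    and center_g: "lie_center br UNIV = module.span scale {e}"
  shows "\<exists>b. lie_subalgebra scale br b
           \<and> {x + y | x y. x \<in> b \<and> y \<in> V} = UNIV \<and> b \<inter> V = {0}
           \<and> b \<inter> h = module.span scale {e}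
           \<and> (\<forall>\<beta>\<in>b. \<forall>v\<in>V. br \<beta> v \<in> V)
           \<and> (\<forall>\<beta>\<in>b. in_sp scale V \<omega> (br \<beta>))"
proof -
  interpret lie_alg scale br by (rule lie_alg.intro[OF lie])
  have e_central: "br e x = 0" for x
    using center_g span_base[of e "{e}"] unfolding lie_center_def by blast
  interpret heisenberg_ideal scale br V e \<omega>
    using fd V_sub e_notin symp heis e_central ideal unfolding h_def
    by unfold_locales auto
  show ?thesis
    unfolding h_def
    using lie_subalgebra_normalizer[OF subspace_V] normalizer_plus_V normalizer_inter_V
      normalizer_inter_heis in_sp_bracket
    by (intro exI[of _ "lie_normalizer br V"]) (auto simp: lie_normalizer_def)
qed

end
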